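(* Let $\Omega=\{1,\dots,m\}$, $n\ge1$, $b\in\mathbb{R}^n_{+}$, $v\in\mathbb{R}^{m\times n}_{+}$, and $u\in\mathbb{R}^{m\times m}_{+}$ with $u_{pp}=0$ for all $p$. Define $h:2^{\Omega}\to\mathbb{R}$ by $h(\emptyset)=0$ and $h(\mathcal{S})=\sum_{j=1}^nb_j\max_{i\in\mathcal{S}}v_{ij}+\sum_{(p,q)\in\mathcal{S}\times\mathcal{S}}u_{pq}$ for $\mathcal{S}\neq\emptyset$. Then for all $\ell\in\{0,\dots,m-1\}$ and $k\in\{0,\dots,m\}$, $d^{\ell,k}[h]\le|\mathrm{supp}(u)|\max\{u_{pq}:(p,q)\in\Omega^2\}$.
   Context: $\mathrm{supp}(u)=\{(p,q)\in\Omega^2:u_{pq}>0\}$. $d^{\ell,k}[h]=\max\{h(\mathcal{A}\cup\mathcal{B}\cup\{s\})-h(\mathcal{A}\cup\mathcal{B})-h(\mathcal{A}\cup\{s\})+h(\mathcal{A}):\mathcal{A},\mathcal{B}\subseteq\Omega,s\in\Omega,|\mathcal{A}|=\ell,|\mathcal{B}|=k\}$. *)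

theory Defs
  imports Complex_Main
begin

definition hfun :: "nat \<Rightarrow> (nat \<Rightarrow> real) \<Rightarrow> (nat \<Rightarrow> nat \<Rightarrow> real) \<Rightarrow> (nat \<Rightarrow> nat \<Rightarrow> real) \<Rightarrow> nat set \<Rightarrow> real" where
  "hfun n b v u S = (if S = {} then 0 else
     (\<Sum>j\<in>{1..n}. b j * Max ((\<lambda>i. v i j) ` S)) + (\<Sum>(p,q)\<in>S \<times> S. u p q))"

definition dlk :: "nat \<Rightarrow> nat \<Rightarrow> nat \<Rightarrow> (nat set \<Rightarrow> real) \<Rightarrow> real" where
  "dlk m l k h = Max {h (A \<union> B \<union> {s}) - h (A \<union> B) - h (A \<union> {s}) + h A | A B s.
      A \<subseteq> {1..m} \<and> B \<subseteq> {1..m} \<and> s \<in> {1..m} \<and> card A = l \<and> card B = k}"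

definition supp :: "nat \<Rightarrow> (nat \<Rightarrow> nat \<Rightarrow> real) \<Rightarrow> (nat \<times> nat) set" where
  "supp m u = {(p,q) \<in> {1..m} \<times> {1..m}. u p q > 0}"

end

theory Submission
  imports Defs
begin

text \<open>Split \<open>h = F + G\<close>, where \<open>F\<close> is the weighted sum over \<open>j\<close> of \<open>max\<^sub>i\<^sub>\<in>\<^sub>S v i j\<close> and
  \<open>G S\<close> is the sum of \<open>u\<close> over \<open>S \<times> S\<close>. The gain \<open>max x c - c\<close> of a maximum decreases in \<open>c\<close>,
  so \<open>F\<close> is submodular and contributes nothing positive to \<open>d\<^sup>\<ell>\<^sup>,\<^sup>k[h]\<close>. For \<open>s \<notin> A \<union> B\<close> the
  second difference of \<open>G\<close> is the sum of \<open>u\<close> over the pairs formed by \<open>s\<close> and a point of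
  \<open>B - A\<close>, which is at most the sum of \<open>u\<close> over its support.\<close>

definition weighted_max_sum :: "'j set \<Rightarrow> ('j \<Rightarrow> real) \<Rightarrow> ('a \<Rightarrow> 'j \<Rightarrow> real) \<Rightarrow> 'a set \<Rightarrow> real" where
  "weighted_max_sum J b w S = (\<Sum>j\<in>J. b j * Max (insert 0 ((\<lambda>i. w i j) ` S)))"

definition pair_sum :: "('a \<Rightarrow> 'a \<Rightarrow> real) \<Rightarrow> 'a set \<Rightarrow> real" where
  "pair_sum u S = (\<Sum>(p,q)\<in>S \<times> S. u p q)"

lemma Max_insert_zero_image:
  fixes f :: "'a \<Rightarrow> real"
  assumes "finite S" "S \<noteq> {}" "\<forall>x\<in>S. 0 \<le> f x"
  shows "Max (insert 0 (f ` S)) = Max (f ` S)"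
proof -
  obtain x where "x \<in> S" using assms(2) by blast
  then have "0 \<le> Max (f ` S)"
    using assms by (meson Max_ge_iff finite_imageI image_eqI image_is_empty)
  then show ?thesis using assms by (simp add: Max_insert)
qed

lemma max_gain_antimono:
  fixes f :: "'a \<Rightarrow> real"
  assumes "finite Y" "X \<subseteq> Y"
  shows "Max (insert 0 (f ` insert s Y)) - Max (insert 0 (f ` Y))
    \<le> Max (insert 0 (f ` insert s X)) - Max (insert 0 (f ` X))"
proof -
  have "finite X" using assms finite_subset by blast
  have insert_eq: "Max (insert 0 (f ` insert s Z)) = max (f s) (Max (insert 0 (f ` Z)))"
    if "finite Z" for Z
  proof -
    have "insert 0 (f ` insert s Z) = insert (f s) (insert 0 (f ` Z))" by auto
    then show ?thesis using that by (simp only: Max.insert finite_insert finite_imageI) simp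
  qed
  have "Max (insert 0 (f ` X)) \<le> Max (insert 0 (f ` Y))"
    using assms by (intro Max_mono) auto
  then show ?thesis
    using insert_eq[OF assms(1)] insert_eq[OF \<open>finite X\<close>] by (simp add: max_def)
qed

lemma weighted_max_sum_submodular:
  assumes "finite Y" "X \<subseteq> Y" "\<forall>j\<in>J. 0 \<le> b j"
  shows "weighted_max_sum J b w (insert s Y) - weighted_max_sum J b w Y
    - weighted_max_sum J b w (insert s X) + weighted_max_sum J b w X \<le> 0"
proof -
  let ?M = "\<lambda>j S. Max (insert 0 ((\<lambda>i. w i j) ` S))"
  have "weighted_max_sum J b w (insert s Y) - weighted_max_sum J b w Y
      - weighted_max_sum J b w (insert s X) + weighted_max_sum J b w X
      = (\<Sum>j\<in>J. b j * ((?M j (insert s Y) - ?M j Y) - (?M j (insert s X) - ?M j X)))"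
    by (simp add: weighted_max_sum_def right_diff_distrib sum_subtractf sum.distrib)
  also have "\<dots> \<le> 0"
  proof (rule sum_nonpos)
    fix j assume "j \<in> J"
    then show "b j * ((?M j (insert s Y) - ?M j Y) - (?M j (insert s X) - ?M j X)) \<le> 0"
      using assms(3) max_gain_antimono[OF assms(1,2), of "\<lambda>i. w i j" s]
      by (simp add: mult_nonneg_nonpos)
  qed
  finally show ?thesis .
qed

lemma pair_sum_second_difference:
  assumes "finite Y" "X \<subseteq> Y" "\<forall>p\<in>insert s Y. \<forall>q\<in>insert s Y. 0 \<le> u p q"
  shows "pair_sum u (insert s Y) - pair_sum u Y - pair_sum u (insert s X) + pair_sum u X
    \<le> pair_sum u (insert s Y)"
proof (cases "s \<in> Y")
  case True
  have "pair_sum u X \<le> pair_sum u (insert s X)"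
    unfolding pair_sum_def
    using assms True finite_subset[OF assms(2,1)] by (intro sum_mono2) auto
  moreover have "0 \<le> pair_sum u Y"
    unfolding pair_sum_def using assms by (intro sum_nonneg) auto
  ultimately show ?thesis using True by (simp add: insert_absorb)
next
  case False
  let ?P = "\<lambda>S. S \<times> S"
  have fin: "finite X" using assms finite_subset by blast
  have "?P Y \<inter> ?P (insert s X) = ?P X" using False assms(2) by auto
  then have union: "pair_sum u Y + pair_sum u (insert s X)
      = (\<Sum>(p,q)\<in>?P Y \<union> ?P (insert s X). u p q) + pair_sum u X"
    unfolding pair_sum_def using assms(1) fin
    by (metis (no_types) finite_SigmaI finite_insert sum.union_inter)
  have "(\<Sum>(p,q)\<in>?P Y \<union> ?P (insert s X). u p q) \<ge> 0"
    using assms by (intro sum_nonneg) auto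
  then show ?thesis using union by simp
qed

lemma pair_sum_le_support:
  assumes "Z \<subseteq> {1..m}" "\<forall>p\<in>{1..m}. \<forall>q\<in>{1..m}. 0 \<le> u p q"
  shows "pair_sum u Z \<le> real (card (supp m u)) * Max {u p q | p q. p \<in> {1..m} \<and> q \<in> {1..m}}"
proof -
  let ?M = "Max {u p q | p q. p \<in> {1..m} \<and> q \<in> {1..m}}"
  have fin_values: "finite {u p q | p q. p \<in> {1..m} \<and> q \<in> {1..m}}"
  proof -
    have "{u p q | p q. p \<in> {1..m} \<and> q \<in> {1..m}} = (\<lambda>(p,q). u p q) ` ({1..m} \<times> {1..m})"
      by force
    then show ?thesis by simp
  qed
  have fin_supp: "finite (supp m u)"
    unfolding supp_def by (rule finite_subset[of _ "{1..m} \<times> {1..m}"]) auto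
  have "pair_sum u Z = (\<Sum>(p,q)\<in>(Z \<times> Z) \<inter> supp m u. u p q)"
    unfolding pair_sum_def using assms finite_subset[OF assms(1)]
    by (intro sum.mono_neutral_right) (force simp: supp_def)+
  also have "\<dots> \<le> (\<Sum>(p,q)\<in>supp m u. u p q)"
    using fin_supp by (intro sum_mono2) (auto simp: supp_def)
  also have "\<dots> \<le> real (card (supp m u)) * ?M"
    using fin_values by (intro sum_bounded_above) (auto simp: supp_def intro!: Max_ge)
  finally show ?thesis .
qed

lemma hfun_eq_weighted_max_sum_pair_sum:
  assumes "S \<subseteq> {1..m}" "\<forall>i\<in>{1..m}. \<forall>j\<in>{1..n}. 0 \<le> v i j"
  shows "hfun n b v u S = weighted_max_sum {1..n} b v S + pair_sum u S"
proof (cases "S = {}")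
  case False
  have "finite S" using assms(1) finite_subset by blast
  have "Max (insert 0 ((\<lambda>i. v i j) ` S)) = Max ((\<lambda>i. v i j) ` S)" if "j \<in> {1..n}" for j
    using that assms False \<open>finite S\<close> by (intro Max_insert_zero_image) auto
  then show ?thesis
    using False by (simp add: hfun_def weighted_max_sum_def pair_sum_def)
qed (simp add: hfun_def weighted_max_sum_def pair_sum_def)

lemma hfun_second_difference_le:
  assumes "X \<subseteq> Y" "Y \<subseteq> {1..m}" "s \<in> {1..m}"
    and "\<forall>j\<in>{1..n}. 0 \<le> b j"
    and "\<forall>i\<in>{1..m}. \<forall>j\<in>{1..n}. 0 \<le> v i j"
    and "\<forall>p\<in>{1..m}. \<forall>q\<in>{1..m}. 0 \<le> u p q"
  shows "hfun n b v u (insert s Y) - hfun n b v u Y - hfun n b v u (insert s X) + hfun n b v u X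
    \<le> real (card (supp m u)) * Max {u p q | p q. p \<in> {1..m} \<and> q \<in> {1..m}}"
proof -
  have finY: "finite Y" using assms(2) finite_subset by blast
  have sY: "insert s Y \<subseteq> {1..m}" using assms(2,3) by simp
  have F: "weighted_max_sum {1..n} b v (insert s Y) - weighted_max_sum {1..n} b v Y
      - weighted_max_sum {1..n} b v (insert s X) + weighted_max_sum {1..n} b v X \<le> 0"
    using weighted_max_sum_submodular[OF finY assms(1,4)] .
  have G: "pair_sum u (insert s Y) - pair_sum u Y - pair_sum u (insert s X) + pair_sum u X
      \<le> pair_sum u (insert s Y)"
    using sY assms(6) by (intro pair_sum_second_difference[OF finY assms(1)]) blast
  have h_eq: "hfun n b v u S = weighted_max_sum {1..n} b v S + pair_sum u S" if "S \<subseteq> {1..m}" for S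
    using hfun_eq_weighted_max_sum_pair_sum[OF that assms(5)] .
  have "X \<subseteq> {1..m}" "insert s X \<subseteq> {1..m}" using assms(1) sY by auto
  then show ?thesis
    using F G pair_sum_le_support[OF sY assms(6)] h_eq[OF sY] h_eq[OF assms(2)] h_eq
    by simp
qed

lemma dlk_le:
  assumes "1 \<le> m" "l \<le> m" "k \<le> m"
    and "\<And>A B s. A \<subseteq> {1..m} \<Longrightarrow> B \<subseteq> {1..m} \<Longrightarrow> s \<in> {1..m} \<Longrightarrow>
      h (A \<union> B \<union> {s}) - h (A \<union> B) - h (A \<union> {s}) + h A \<le> C"
  shows "dlk m l k h \<le> C"
proof -
  let ?d = "\<lambda>(A, B, s). h (A \<union> B \<union> {s}) - h (A \<union> B) - h (A \<union> {s}) + h A"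
  let ?D = "{h (A \<union> B \<union> {s}) - h (A \<union> B) - h (A \<union> {s}) + h A | A B s.
      A \<subseteq> {1..m} \<and> B \<subseteq> {1..m} \<and> s \<in> {1..m} \<and> card A = l \<and> card B = k}"
  have "?D \<subseteq> ?d ` (Pow {1..m} \<times> Pow {1..m} \<times> {1..m})"
    by (force simp: image_iff)
  then have "finite ?D" by (rule finite_subset) simp
  moreover have "?D \<noteq> {}"
  proof -
    have "{1..l} \<subseteq> {1..m} \<and> {1..k} \<subseteq> {1..m} \<and> 1 \<in> {1..m} \<and> card {1..l} = l \<and> card {1..k} = k"
      using assms(1-3) by auto
    then show ?thesis by blast
  qed
  ultimately show ?thesis
    unfolding dlk_def using assms(4) by (auto simp: Max_le_iff)
qed

theorem mainTheorem17:
  fixes m n :: nat and b :: "nat \<Rightarrow> real" and v u :: "nat \<Rightarrow> nat \<Rightarrow> real"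
  assumes "n \<ge> 1"
    and "\<forall>j\<in>{1..n}. b j \<ge> 0"
    and "\<forall>i\<in>{1..m}. \<forall>j\<in>{1..n}. v i j \<ge> 0"
    and "\<forall>p\<in>{1..m}. \<forall>q\<in>{1..m}. u p q \<ge> 0"
    and "\<forall>p\<in>{1..m}. u p p = 0"
    and "l < m" and "k \<le> m"
  shows "dlk m l k (hfun n b v u)
           \<le> real (card (supp m u)) * Max {u p q | p q. p \<in> {1..m} \<and> q \<in> {1..m}}"
proof (rule dlk_le)
  fix A B :: "nat set" and s :: nat
  assume "A \<subseteq> {1..m}" "B \<subseteq> {1..m}" "s \<in> {1..m}"
  moreover have "A \<union> B \<union> {s} = insert s (A \<union> B)" "A \<union> {s} = insert s A" by auto
  ultimately show "hfun n b v u (A \<union> B \<union> {s}) - hfun n b v u (A \<union> B)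
      - hfun n b v u (A \<union> {s}) + hfun n b v u A
      \<le> real (card (supp m u)) * Max {u p q | p q. p \<in> {1..m} \<and> q \<in> {1..m}}"
    using hfun_second_difference_le[of A "A \<union> B" m s n b v u] assms(2-4) by simp
qed (use assms(6,7) in auto)

end
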